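(* Let $C\subseteq\mathbb{F}_q^n$ be a linear code, $t\ge 0$ an integer, and $A,B\subseteq\mathbb{F}_q^n$ linear codes satisfying $A*B\subseteq C^\perp$, $\dim A>t$, $\mathrm{d}(A^\perp)>t$ and $\mathrm{d}(A)+\mathrm{d}(C)>n$. Let $\mathbf{y}=\mathbf{c}+\mathbf{e}$ with $\mathbf{c}\in C$, $\mathrm{w}(\mathbf{e})=t$, $I_{\mathbf{e}}=\mathrm{supp}(\mathbf{e})$, and let $M=M_1\cap M_2$ where $M_1=\{\mathbf{a}\in A\mid \langle \mathbf{a}*\mathbf{y},\mathbf{b}\rangle=0\ \forall \mathbf{b}\in B\}$ and $M_2=\{\mathbf{a}\in A\mid \langle \mathbf{a}*\mathbf{y}^2,\mathbf{v}\rangle=0\ \forall \mathbf{v}\in (B^{\perp}*C)^{\perp}\}$. If $A(I_{\mathbf{e}})=M$, then $\dim B+\dim (B^\perp*C)^\perp\ge t$.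
   Context: All codes are $\mathbb{F}_q$-linear subspaces of $\mathbb{F}_q^n$. $\mathbf{u}*\mathbf{v}=(u_1v_1,\dots,u_nv_n)$, $\mathbf{u}^i=(u_1^i,\dots,u_n^i)$; $A*B$ is the span of all $\mathbf{a}*\mathbf{b}$; $\langle\mathbf{u},\mathbf{v}\rangle=\sum_iu_iv_i$, $X^\perp$ the dual. $\mathrm{w}$ Hamming weight, $\mathrm{d}$ minimum distance, $\mathrm{supp}(\mathbf{x})=\{i:x_i\ne0\}$. For $J\subseteq\{1,\dots,n\}$, $A(J)=\{\mathbf{a}\in A: a_j=0\ \forall j\in J\}\subseteq\mathbb{F}_q^n$. *)

theory Defs
  imports "HOL-Analysis.Analysis" "HOL-Library.Extended_Nat"
begin

text \<open>Vectors of F_q^n are modelled as 'a ^ 'n with 'a a finite field and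
 n = CARD('n). Codes are subspaces w.r.t. vec.subspace, dimension is vec.dim.\<close>

definition schur :: "'a::field ^ 'n \<Rightarrow> 'a ^ 'n \<Rightarrow> 'a ^ 'n" where
  "schur u v = (\<chi> i. u $ i * v $ i)"

definition schur_codes :: "('a::field ^ 'n) set \<Rightarrow> ('a ^ 'n) set \<Rightarrow> ('a ^ 'n) set" where
  "schur_codes A B = vec.span {schur a b | a b. a \<in> A \<and> b \<in> B}"

definition dotp :: "'a::field ^ 'n \<Rightarrow> 'a ^ 'n \<Rightarrow> 'a" where
  "dotp u v = (\<Sum>i\<in>UNIV. u $ i * v $ i)"

definition dual_code :: "('a::field ^ 'n) set \<Rightarrow> ('a ^ 'n) set" where
  "dual_code X = {u. \<forall>x\<in>X. dotp u x = 0}"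

definition supp :: "'a::zero ^ 'n \<Rightarrow> 'n set" where
  "supp x = {i. x $ i \<noteq> 0}"

definition weight :: "'a::zero ^ 'n \<Rightarrow> nat" where
  "weight x = card (supp x)"

text \<open>Minimum distance; the zero code has minimum distance infinity.\<close>
definition min_dist :: "('a::zero ^ 'n) set \<Rightarrow> enat" where
  "min_dist X = (INF x\<in>X - {0}. enat (weight x))"

definition shortened :: "('a::zero ^ 'n) set \<Rightarrow> 'n set \<Rightarrow> ('a ^ 'n) set" where
  "shortened A J = {a\<in>A. \<forall>j\<in>J. a $ j = 0}"

end

theory Submission
  imports Defs
begin

text \<open>Since \<open>d(A\<^sup>\<perp>) > t\<close>, every vector agrees on any \<open>t\<close> prescribed coordinates
  with a codeword of \<open>A\<close>, so shortening \<open>A\<close> at the \<open>t\<close> error positions lowers its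
  dimension by exactly \<open>t\<close>. On the other hand \<open>M\<close> is the subspace of \<open>A\<close> orthogonal to
  \<open>y * B\<close> and to \<open>y\<^sup>2 * (B\<^sup>\<perp> * C)\<^sup>\<perp>\<close>, i.e. it is cut out of \<open>A\<close> by at most
  \<open>dim B + dim (B\<^sup>\<perp> * C)\<^sup>\<perp>\<close> linear conditions. Comparing dimensions in
  \<open>A(I\<^sub>e) = M\<close> gives the bound.\<close>

lemma dotp_schur: "dotp (schur a z) b = dotp a (schur z b)"
  unfolding dotp_def schur_def by (simp add: mult.assoc)

lemma dotp_diff_scale: "dotp (x - c *s u) w = dotp x w - c * dotp u w"
  unfolding dotp_def by (simp add: sum_subtractf sum_distrib_left algebra_simps)

lemma linear_schur: "Vector_Spaces.linear (*s) (*s) (schur z)"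
  by unfold_locales (auto simp: schur_def vec_eq_iff algebra_simps)

lemma subspace_dual_code: "vec.subspace (dual_code X)"
  unfolding vec.subspace_def dual_code_def dotp_def
  by (auto simp: sum.distrib distrib_right mult.assoc simp flip: sum_distrib_left)

lemma dual_code_span: "dual_code (vec.span S) = dual_code S"
proof
  show "dual_code (vec.span S) \<subseteq> dual_code S"
    using vec.span_superset unfolding dual_code_def by blast
  have "vec.span S \<subseteq> {x. dotp u x = 0}" if "u \<in> dual_code S" for u
  proof (rule vec.span_minimal)
    show "vec.subspace {x. dotp u x = 0}"
      unfolding vec.subspace_def dotp_def
      by (auto simp: sum.distrib distrib_left mult.left_commute[of "u $ i" for i]
               simp flip: sum_distrib_left)
  qed (use that in \<open>auto simp: dual_code_def\<close>)
  then show "dual_code S \<subseteq> dual_code (vec.span S)"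
    unfolding dual_code_def by blast
qed

lemma dim_le_dim_inter_dual_code_singleton:
  assumes S: "vec.subspace S"
  shows "vec.dim S \<le> vec.dim (S \<inter> dual_code {w}) + 1"
proof (cases "S \<subseteq> dual_code {w}")
  case True
  then show ?thesis by (simp add: Int_absorb2)
next
  case False
  then obtain u0 where u0: "u0 \<in> S" "dotp u0 w \<noteq> 0"
    by (auto simp: dual_code_def)
  let ?H = "S \<inter> dual_code {w}"
  have "S \<subseteq> vec.span (insert u0 ?H)"
  proof
    fix u assume u: "u \<in> S"
    define c where "c = dotp u w / dotp u0 w"
    have "dotp (u - c *s u0) w = 0"
      using u0(2) by (simp add: dotp_diff_scale c_def)
    then have "u - c *s u0 \<in> ?H"
      using u u0 S by (simp add: dual_code_def vec.subspace_diff vec.subspace_scale)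
    then have "(u - c *s u0) + c *s u0 \<in> vec.span (insert u0 ?H)"
      by (intro vec.span_add) (simp_all add: vec.span_base vec.span_scale)
    then show "u \<in> vec.span (insert u0 ?H)" by simp
  qed
  then have "vec.dim S \<le> vec.dim (insert u0 ?H)"
    by (rule vec.subset_le_dim)
  also have "\<dots> \<le> vec.dim ?H + 1"
    by (simp add: vec.dim_insert)
  finally show ?thesis .
qed

lemma dim_le_dim_inter_dual_code_card:
  assumes "finite W" "vec.subspace A"
  shows "vec.dim A \<le> vec.dim (A \<inter> dual_code W) + card W"
  using assms(1)
proof (induction W rule: finite_induct)
  case empty
  then show ?case by (simp add: dual_code_def)
next
  case (insert w W)
  have "vec.subspace (A \<inter> dual_code W)"
    using assms(2) subspace_dual_code by (rule vec.subspace_inter)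
  moreover have "A \<inter> dual_code (insert w W) = A \<inter> dual_code W \<inter> dual_code {w}"
    by (auto simp: dual_code_def)
  ultimately show ?case
    using insert dim_le_dim_inter_dual_code_singleton[of "A \<inter> dual_code W" w] by simp
qed

lemma dim_le_dim_inter_dual_code:
  assumes "vec.subspace A"
  shows "vec.dim A \<le> vec.dim (A \<inter> dual_code W) + vec.dim W"
proof -
  obtain BW where BW: "BW \<subseteq> W" "vec.independent BW" "W \<subseteq> vec.span BW" "card BW = vec.dim W"
    by (rule vec.basis_exists)
  have "vec.span BW = vec.span W"
    using BW(1,3) by (metis vec.span_mono vec.span_span subset_antisym)
  then have "dual_code W = dual_code BW"
    by (metis dual_code_span)
  then show ?thesis
    using dim_le_dim_inter_dual_code_card[OF vec.finiteI_independent[OF BW(2)] assms] BW(4)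
    by simp
qed

lemma schur_annihilator_eq:
  "{a \<in> A. \<forall>b\<in>B. dotp (schur a z) b = 0} = A \<inter> dual_code (schur z ` B)"
  by (auto simp: dual_code_def dotp_schur)

lemma subspace_schur_annihilator:
  "vec.subspace A \<Longrightarrow> vec.subspace {a \<in> A. \<forall>b\<in>B. dotp (schur a z) b = 0}"
  unfolding schur_annihilator_eq by (rule vec.subspace_inter[OF _ subspace_dual_code])

lemma dim_le_dim_schur_annihilator:
  assumes "vec.subspace A"
  shows "vec.dim A \<le> vec.dim {a \<in> A. \<forall>b\<in>B. dotp (schur a z) b = 0} + vec.dim B"
  using dim_le_dim_inter_dual_code[OF assms, of "schur z ` B"]
    vec.dim_image_le[OF linear_schur, of z B]
  unfolding schur_annihilator_eq by linarith

lemma dual_code_nontrivial: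
  fixes S :: "('a::field ^ 'n) set"
  assumes "vec.subspace S" "S \<noteq> UNIV"
  obtains x where "x \<noteq> 0" "x \<in> dual_code S"
proof -
  have "vec.span S = S"
    using assms(1) by (rule vec.span_eq_iff[THEN iffD2])
  then have "vec.span S \<subset> vec.span UNIV"
    using assms(2) unfolding vec.span_UNIV by blast
  then have "vec.dim S < vec.dim (UNIV :: ('a ^ 'n) set)"
    by (rule vec.dim_psubset)
  moreover have "vec.dim (UNIV :: ('a ^ 'n) set) \<le> vec.dim (dual_code S) + vec.dim S"
    using dim_le_dim_inter_dual_code[OF vec.subspace_UNIV, of S] by simp
  ultimately have "\<not> dual_code S \<subseteq> {0}"
    by (simp flip: vec.dim_eq_0)
  then show ?thesis using that by blast
qed

lemma subspace_shortened_UNIV: "vec.subspace (shortened UNIV J)"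
  unfolding vec.subspace_def shortened_def by simp

lemma sums_shortened_UNIV_eq_UNIV:
  fixes A :: "('a::field ^ 'n) set"
  assumes A: "vec.subspace A" and dual_dist: "enat (card J) < min_dist (dual_code A)"
  shows "{a + z | a z. a \<in> A \<and> z \<in> shortened UNIV J} = UNIV" (is "?S = _")
proof (rule ccontr)
  assume "?S \<noteq> UNIV"
  then obtain x where x: "x \<noteq> 0" "x \<in> dual_code ?S"
    by (rule dual_code_nontrivial[OF vec.subspace_sums[OF A subspace_shortened_UNIV]])
  have "0 \<in> shortened UNIV J"
    by (simp add: shortened_def)
  then have "A \<subseteq> ?S"
    by force
  then have "x \<in> dual_code A"
    using x(2) unfolding dual_code_def by blast
  then have "min_dist (dual_code A) \<le> enat (weight x)"
    unfolding min_dist_def using x(1) by (intro INF_lower) auto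
  moreover have "x $ i = 0" if "i \<notin> J" for i
  proof -
    have "axis i 1 \<in> ?S"
      using that vec.subspace_0[OF A] by (force simp: shortened_def axis_def)
    then have "dotp x (axis i 1) = 0"
      using x(2) by (simp add: dual_code_def)
    then show ?thesis
      unfolding dotp_def axis_def by (simp add: if_distrib cong: if_cong)
  qed
  then have "weight x \<le> card J"
    unfolding weight_def supp_def by (intro card_mono) auto
  ultimately show False
    using dual_dist enat_ord_simps(1) leD order_trans by metis
qed

lemma dim_shortened:
  fixes A :: "('a::field ^ 'n) set"
  assumes "vec.subspace A" "enat (card J) < min_dist (dual_code A)"
  shows "vec.dim (shortened A J) + card J = vec.dim A"
proof -
  define T where "T = shortened (UNIV :: ('a ^ 'n) set) J"
  have "vec.dim {a + z | a z. a \<in> A \<and> z \<in> T} + vec.dim (A \<inter> T) = vec.dim A + vec.dim T"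
    unfolding T_def by (rule vec.dim_sums_Int[OF assms(1) subspace_shortened_UNIV])
  moreover have "{a + z | a z. a \<in> A \<and> z \<in> T} = UNIV"
    unfolding T_def by (rule sums_shortened_UNIV_eq_UNIV[OF assms])
  moreover have "vec.dim (UNIV :: ('a ^ 'n) set) = CARD('n)"
    by (simp add: card_cart_basis)
  moreover have "vec.dim T = CARD('n) - card J"
    using dim_substandard_cart[of "- J", where 'a='a]
    by (simp add: T_def shortened_def Ball_def Compl_eq_Diff_UNIV card_Diff_subset)
  moreover have "A \<inter> T = shortened A J"
    by (auto simp: T_def shortened_def)
  moreover have "card J \<le> CARD('n)"
    by (simp add: card_mono)
  ultimately show ?thesis
    by simp
qed

theorem theorem3p6:
  fixes C A B :: "('a::{field,finite} ^ 'n) set"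
    and t :: nat and c e y :: "'a ^ 'n"
  assumes "vec.subspace C" "vec.subspace A" "vec.subspace B"
    and "schur_codes A B \<subseteq> dual_code C"
    and "vec.dim A > t"
    and "enat t < min_dist (dual_code A)"
    and "min_dist A + min_dist C > enat CARD('n)"
    and "c \<in> C" and "weight e = t" and "y = c + e"
    and "shortened A (supp e) =
           {a \<in> A. \<forall>b\<in>B. dotp (schur a y) b = 0}
         \<inter> {a \<in> A. \<forall>v\<in>dual_code (schur_codes (dual_code B) C).
                      dotp (schur a (schur y y)) v = 0}"
  shows "vec.dim B + vec.dim (dual_code (schur_codes (dual_code B) C)) \<ge> t"
proof -
  \<comment> \<open>Only the dual distance of \<open>A\<close> and the description of \<open>A(I\<^sub>e)\<close> are needed; the
      remaining hypotheses belong to the error-correcting-pair setting of the paper.\<close>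
  define D where "D = dual_code (schur_codes (dual_code B) C)"
  define M1 where "M1 = {a \<in> A. \<forall>b\<in>B. dotp (schur a y) b = 0}"
  define M where "M = {a \<in> M1. \<forall>v\<in>D. dotp (schur a (schur y y)) v = 0}"
  have "shortened A (supp e) = M"
    using assms(11) by (auto simp: M_def M1_def D_def)
  then have "vec.dim M + t = vec.dim A"
    using dim_shortened[OF assms(2), of "supp e"] assms(6,9) by (simp add: weight_def)
  moreover have "vec.dim A \<le> vec.dim M1 + vec.dim B"
    unfolding M1_def by (rule dim_le_dim_schur_annihilator[OF assms(2)])
  moreover have "vec.dim M1 \<le> vec.dim M + vec.dim D"
    unfolding M_def M1_def
    by (rule dim_le_dim_schur_annihilator[OF subspace_schur_annihilator[OF assms(2)]])
  ultimately show ?thesis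
    unfolding D_def by linarith
qed

end
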